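(* (i) For every $n\ge3$, any ortholattice in which the $n$OA law holds is orthomodular. (ii) For every $n\ge3$, there exists an orthomodular lattice in which the $n$OA law fails.
   Context: An ortholattice (OL) is a bounded lattice $(L,\cap,\cup,0,1)$ with a unary operation $'$ satisfying $a''=a$, $a\le b\Rightarrow b'\le a'$, $a\cap a'=0$ and $a\cup a'=1$. An orthomodular lattice (OML) is an OL satisfying: $a\le b$ implies $b=a\cup(a'\cap b)$. Write $a\to b=a'\cup(a\cap b)$. The operation $\overset{(n)}{\equiv}$ on variables $a_1,\dots,a_n$ is defined by $$a_1\overset{(3)}{\equiv}a_2=((a_1\to a_3)\cap(a_2\to a_3))\cup((a_1'\to a_3)\cap(a_2'\to a_3)),$$ $$a_1\overset{(n)}{\equiv}a_2=(a_1\overset{(n-1)}{\equiv}a_2)\cup((a_1\overset{(n-1)}{\equiv}a_n)\cap(a_2\overset{(n-1)}{\equiv}a_n))\quad (n\ge4).$$ In each $(n-1)$-level subexpression only the two displayed variables are substituted; $a_3$ stays the fixed third variable. The $n$OA law is the equation $(a_1\to a_3)\cap(a_1\overset{(n)}{\equiv}a_2)\le a_2\to a_3$, required for all $a_1,\dots,a_n$. *)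

theory Defs
  imports Main
begin

record 'a ol_struct =
  ol_carrier :: "'a set"
  ol_meet :: "'a \<Rightarrow> 'a \<Rightarrow> 'a"
  ol_join :: "'a \<Rightarrow> 'a \<Rightarrow> 'a"
  ol_compl :: "'a \<Rightarrow> 'a"
  ol_zero :: 'a
  ol_one :: 'a

definition ol_le :: "'a ol_struct \<Rightarrow> 'a \<Rightarrow> 'a \<Rightarrow> bool" where
  "ol_le L a b \<longleftrightarrow> ol_meet L a b = a"

definition ortholattice :: "'a ol_struct \<Rightarrow> bool" where
  "ortholattice L \<longleftrightarrow>
     (let A = ol_carrier L; m = ol_meet L; j = ol_join L; c = ol_compl L in
      (\<forall>a\<in>A. \<forall>b\<in>A. m a b \<in> A \<and> j a b \<in> A) \<and>
      (\<forall>a\<in>A. c a \<in> A) \<and> ol_zero L \<in> A \<and> ol_one L \<in> A \<and>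
      (\<forall>a\<in>A. \<forall>b\<in>A. m a b = m b a \<and> j a b = j b a) \<and>
      (\<forall>a\<in>A. \<forall>b\<in>A. \<forall>d\<in>A. m (m a b) d = m a (m b d) \<and> j (j a b) d = j a (j b d)) \<and>
      (\<forall>a\<in>A. \<forall>b\<in>A. m a (j a b) = a \<and> j a (m a b) = a) \<and>
      (\<forall>a\<in>A. m a (ol_zero L) = ol_zero L \<and> j a (ol_one L) = ol_one L) \<and>
      (\<forall>a\<in>A. c (c a) = a) \<and>
      (\<forall>a\<in>A. \<forall>b\<in>A. ol_le L a b \<longrightarrow> ol_le L (c b) (c a)) \<and>
      (\<forall>a\<in>A. m a (c a) = ol_zero L \<and> j a (c a) = ol_one L))"

definition orthomodular :: "'a ol_struct \<Rightarrow> bool" where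
  "orthomodular L \<longleftrightarrow> ortholattice L \<and>
     (\<forall>a\<in>ol_carrier L. \<forall>b\<in>ol_carrier L. ol_le L a b \<longrightarrow>
        b = ol_join L a (ol_meet L (ol_compl L a) b))"

definition ol_imp :: "'a ol_struct \<Rightarrow> 'a \<Rightarrow> 'a \<Rightarrow> 'a" where
  "ol_imp L a b = ol_join L (ol_compl L a) (ol_meet L a b)"

text \<open>\<open>oa_eqv L k v x y\<close> is \<open>x \<equiv>(k) y\<close>, where \<open>v i\<close> is the variable \<open>a_i\<close> (\<open>i \<ge> 3\<close>).
  For \<open>k \<le> 3\<close> it is the base expression \<open>\<equiv>(3)\<close>; for \<open>k \<ge> 4\<close> the recursion of the paper.\<close>

primrec oa_eqv :: "'a ol_struct \<Rightarrow> nat \<Rightarrow> (nat \<Rightarrow> 'a) \<Rightarrow> 'a \<Rightarrow> 'a \<Rightarrow> 'a" where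
  "oa_eqv L 0 v x y =
     ol_join L (ol_meet L (ol_imp L x (v 3)) (ol_imp L y (v 3)))
               (ol_meet L (ol_imp L (ol_compl L x) (v 3)) (ol_imp L (ol_compl L y) (v 3)))"
| "oa_eqv L (Suc k) v x y =
     (if Suc k \<le> 3 then oa_eqv L k v x y
      else ol_join L (oa_eqv L k v x y)
             (ol_meet L (oa_eqv L k v x (v (Suc k))) (oa_eqv L k v y (v (Suc k)))))"

definition nOA_law :: "'a ol_struct \<Rightarrow> nat \<Rightarrow> bool" where
  "nOA_law L n \<longleftrightarrow>
     (\<forall>v. (\<forall>i\<in>{1..n}. v i \<in> ol_carrier L) \<longrightarrow>
        ol_le L (ol_meet L (ol_imp L (v 1) (v 3)) (oa_eqv L n v (v 1) (v 2)))
                (ol_imp L (v 2) (v 3)))"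

end

theory Submission
  imports Defs "HOL-Library.Nat_Bijection"
begin

(* Both halves of the theorem go through the 3OA inequality
     (a1 -> a3) meet (a1 ==(3) a2)  <=  a2 -> a3,
   recorded below as oa3_instance.

   (i)  In any ortholattice the expressions a1 ==(n) a2 grow with n, so the nOA law
        implies every instance of the 3OA inequality.  The instance a1 = 0, a2 = a',
        a3 = b with a <= b says exactly b <= a join (a' meet b), i.e. orthomodularity.

   (ii) Counterexample: the lattice of orthoclosed subsets of a 13-point orthogonality
        space.  Closed subsets of any orthogonality space form an ortholattice; for this
        space there are 28 of them (empty, all, the points, the orthocomplements of
        points), which lets orthomodularity and the failure of one 3OA instance be
        checked by evaluation.  Since nOA implies 3OA, every nOA law fails there. *)

text \<open>One instance of the 3OA inequality
  \<open>(a\<^sub>1 \<rightarrow> a\<^sub>3) \<sqinter> (a\<^sub>1 \<equiv>(3) a\<^sub>2) \<le> a\<^sub>2 \<rightarrow> a\<^sub>3\<close>; the base level of \<open>oa_eqv\<close>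
  only reads the variable \<open>a\<^sub>3\<close>, so a constant assignment suffices.\<close>

definition oa3_instance :: "'a ol_struct \<Rightarrow> 'a \<Rightarrow> 'a \<Rightarrow> 'a \<Rightarrow> bool" where
  "oa3_instance L a1 a2 a3 \<longleftrightarrow>
     ol_le L (ol_meet L (ol_imp L a1 a3) (oa_eqv L 0 (\<lambda>_. a3) a1 a2)) (ol_imp L a2 a3)"

section \<open>Part (i): the \<open>n\<close>OA law implies orthomodularity\<close>

locale OL =
  fixes L :: "'a ol_struct"
  assumes ortholattice: "ortholattice L"
begin

abbreviation carrier :: "'a set" where "carrier \<equiv> ol_carrier L"
abbreviation meet :: "'a \<Rightarrow> 'a \<Rightarrow> 'a" (infixl "\<sqinter>\<^sub>L" 70) where "x \<sqinter>\<^sub>L y \<equiv> ol_meet L x y"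
abbreviation join :: "'a \<Rightarrow> 'a \<Rightarrow> 'a" (infixl "\<squnion>\<^sub>L" 65) where "x \<squnion>\<^sub>L y \<equiv> ol_join L x y"
abbreviation compl :: "'a \<Rightarrow> 'a" ("_\<^sup>\<bottom>" [1000] 1000) where "x\<^sup>\<bottom> \<equiv> ol_compl L x"
abbreviation le :: "'a \<Rightarrow> 'a \<Rightarrow> bool" (infix "\<le>\<^sub>L" 50) where "x \<le>\<^sub>L y \<equiv> ol_le L x y"
abbreviation zero :: 'a ("\<zero>") where "\<zero> \<equiv> ol_zero L"
abbreviation one :: 'a ("\<one>") where "\<one> \<equiv> ol_one L"

lemmas ol_axioms = ortholattice[unfolded ortholattice_def Let_def]

lemma meet_closed: "x \<in> carrier \<Longrightarrow> y \<in> carrier \<Longrightarrow> x \<sqinter>\<^sub>L y \<in> carrier"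
  and join_closed: "x \<in> carrier \<Longrightarrow> y \<in> carrier \<Longrightarrow> x \<squnion>\<^sub>L y \<in> carrier"
  and compl_closed: "x \<in> carrier \<Longrightarrow> x\<^sup>\<bottom> \<in> carrier"
  and zero_closed: "\<zero> \<in> carrier"
  and one_closed: "\<one> \<in> carrier"
  using ol_axioms by blast+

lemma meet_comm: "x \<in> carrier \<Longrightarrow> y \<in> carrier \<Longrightarrow> x \<sqinter>\<^sub>L y = y \<sqinter>\<^sub>L x"
  and join_comm: "x \<in> carrier \<Longrightarrow> y \<in> carrier \<Longrightarrow> x \<squnion>\<^sub>L y = y \<squnion>\<^sub>L x"
  and meet_assoc: "x \<in> carrier \<Longrightarrow> y \<in> carrier \<Longrightarrow> z \<in> carrier \<Longrightarrow> x \<sqinter>\<^sub>L y \<sqinter>\<^sub>L z = x \<sqinter>\<^sub>L (y \<sqinter>\<^sub>L z)"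
  and join_assoc: "x \<in> carrier \<Longrightarrow> y \<in> carrier \<Longrightarrow> z \<in> carrier \<Longrightarrow> x \<squnion>\<^sub>L y \<squnion>\<^sub>L z = x \<squnion>\<^sub>L (y \<squnion>\<^sub>L z)"
  and meet_absorb: "x \<in> carrier \<Longrightarrow> y \<in> carrier \<Longrightarrow> x \<sqinter>\<^sub>L (x \<squnion>\<^sub>L y) = x"
  and join_absorb: "x \<in> carrier \<Longrightarrow> y \<in> carrier \<Longrightarrow> x \<squnion>\<^sub>L (x \<sqinter>\<^sub>L y) = x"
  and meet_zero: "x \<in> carrier \<Longrightarrow> x \<sqinter>\<^sub>L \<zero> = \<zero>"
  and join_one: "x \<in> carrier \<Longrightarrow> x \<squnion>\<^sub>L \<one> = \<one>"
  and compl_compl: "x \<in> carrier \<Longrightarrow> x\<^sup>\<bottom>\<^sup>\<bottom> = x"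
  and join_compl: "x \<in> carrier \<Longrightarrow> x \<squnion>\<^sub>L x\<^sup>\<bottom> = \<one>"
  using ol_axioms by blast+

lemma meet_one: "x \<in> carrier \<Longrightarrow> x \<sqinter>\<^sub>L \<one> = x"
  by (metis meet_absorb join_one one_closed)

lemma one_meet: "x \<in> carrier \<Longrightarrow> \<one> \<sqinter>\<^sub>L x = x"
  by (metis meet_one meet_comm one_closed)

lemma join_zero: "x \<in> carrier \<Longrightarrow> x \<squnion>\<^sub>L \<zero> = x"
  by (metis join_absorb meet_zero zero_closed)

lemma zero_meet: "x \<in> carrier \<Longrightarrow> \<zero> \<sqinter>\<^sub>L x = \<zero>"
  by (metis meet_zero meet_comm zero_closed)

lemma zero_join: "x \<in> carrier \<Longrightarrow> \<zero> \<squnion>\<^sub>L x = x"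
  by (metis join_zero join_comm zero_closed)

lemma compl_zero: "\<zero>\<^sup>\<bottom> = \<one>"
  by (metis zero_join join_compl compl_closed zero_closed)

lemma compl_one: "\<one>\<^sup>\<bottom> = \<zero>"
  by (metis compl_zero compl_compl zero_closed)

lemma le_iff_join: "x \<in> carrier \<Longrightarrow> y \<in> carrier \<Longrightarrow> x \<le>\<^sub>L y \<longleftrightarrow> x \<squnion>\<^sub>L y = y"
  unfolding ol_le_def by (metis meet_absorb join_absorb join_comm meet_comm)

lemma meet_idem: "x \<in> carrier \<Longrightarrow> x \<sqinter>\<^sub>L x = x"
  by (metis meet_absorb join_absorb meet_closed)

lemma le_refl: "x \<in> carrier \<Longrightarrow> x \<le>\<^sub>L x"
  unfolding ol_le_def by (rule meet_idem)

lemma le_trans: "x \<in> carrier \<Longrightarrow> y \<in> carrier \<Longrightarrow> z \<in> carrier \<Longrightarrow> x \<le>\<^sub>L y \<Longrightarrow> y \<le>\<^sub>L z \<Longrightarrow> x \<le>\<^sub>L z"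
  unfolding ol_le_def by (metis meet_assoc)

lemma le_antisym: "x \<in> carrier \<Longrightarrow> y \<in> carrier \<Longrightarrow> x \<le>\<^sub>L y \<Longrightarrow> y \<le>\<^sub>L x \<Longrightarrow> x = y"
  unfolding ol_le_def by (metis meet_comm)

lemma join_upper: "x \<in> carrier \<Longrightarrow> y \<in> carrier \<Longrightarrow> x \<le>\<^sub>L x \<squnion>\<^sub>L y"
  unfolding ol_le_def by (rule meet_absorb)

lemma meet_lower: "x \<in> carrier \<Longrightarrow> y \<in> carrier \<Longrightarrow> x \<sqinter>\<^sub>L y \<le>\<^sub>L y"
  unfolding ol_le_def by (simp add: meet_assoc meet_idem)

lemma join_least:
  assumes x: "x \<in> carrier" and y: "y \<in> carrier" and z: "z \<in> carrier"
    and "x \<le>\<^sub>L z" "y \<le>\<^sub>L z"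
  shows "x \<squnion>\<^sub>L y \<le>\<^sub>L z"
proof -
  have "x \<squnion>\<^sub>L z = z" "y \<squnion>\<^sub>L z = z" using assms le_iff_join by blast+
  then have "x \<squnion>\<^sub>L y \<squnion>\<^sub>L z = z" using x y z by (simp add: join_assoc)
  then show ?thesis using x y z by (simp add: le_iff_join join_closed)
qed

lemma meet_mono_right:
  assumes x: "x \<in> carrier" and y: "y \<in> carrier" and z: "z \<in> carrier" and xy: "x \<le>\<^sub>L y"
  shows "z \<sqinter>\<^sub>L x \<le>\<^sub>L z \<sqinter>\<^sub>L y"
proof -
  have "(z \<sqinter>\<^sub>L x) \<sqinter>\<^sub>L (z \<sqinter>\<^sub>L y) = z \<sqinter>\<^sub>L ((x \<sqinter>\<^sub>L z) \<sqinter>\<^sub>L y)"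
    using x y z by (simp add: meet_assoc meet_closed)
  also have "\<dots> = (z \<sqinter>\<^sub>L z) \<sqinter>\<^sub>L (x \<sqinter>\<^sub>L y)"
    using x y z by (simp add: meet_comm[of x z] meet_assoc meet_closed)
  also have "\<dots> = z \<sqinter>\<^sub>L x"
    using z xy by (simp add: meet_idem ol_le_def)
  finally show ?thesis unfolding ol_le_def .
qed

lemma imp_closed: "x \<in> carrier \<Longrightarrow> y \<in> carrier \<Longrightarrow> ol_imp L x y \<in> carrier"
  unfolding ol_imp_def by (simp add: join_closed meet_closed compl_closed)

text \<open>Each level of the recursion only adds a disjunct, so \<open>x \<equiv>(3) y \<le> x \<equiv>(k) y\<close> for all \<open>k\<close>.\<close>

lemma oa_eqv_above_base:
  assumes v: "\<And>i. v i \<in> carrier" and x: "x \<in> carrier" and y: "y \<in> carrier"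
  shows "oa_eqv L k v x y \<in> carrier \<and> oa_eqv L 0 v x y \<le>\<^sub>L oa_eqv L k v x y"
  using x y
proof (induction k arbitrary: x y)
  case 0
  then have "oa_eqv L 0 v x y \<in> carrier" using v by (simp add: join_closed meet_closed compl_closed imp_closed)
  then show ?case by (simp add: le_refl)
next
  case (Suc k)
  let ?extra = "oa_eqv L k v x (v (Suc k)) \<sqinter>\<^sub>L oa_eqv L k v y (v (Suc k))"
  show ?case
  proof (cases "Suc k \<le> 3")
    case True
    then show ?thesis using Suc by simp
  next
    case False
    then have step: "oa_eqv L (Suc k) v x y = oa_eqv L k v x y \<squnion>\<^sub>L ?extra" by simp
    have IH: "oa_eqv L k v x y \<in> carrier" "oa_eqv L 0 v x y \<le>\<^sub>L oa_eqv L k v x y"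
      using Suc by auto
    have "?extra \<in> carrier" using Suc.IH Suc.prems v meet_closed by blast
    moreover have "oa_eqv L 0 v x y \<in> carrier" using Suc.prems v
      by (simp add: join_closed meet_closed compl_closed imp_closed)
    ultimately show ?thesis
      unfolding step using IH join_closed join_upper le_trans by blast
  qed
qed

lemma oa3_instance_of_nOA_law:
  assumes law: "nOA_law L n" and a: "a1 \<in> carrier" "a2 \<in> carrier" "a3 \<in> carrier"
  shows "oa3_instance L a1 a2 a3"
proof -
  define v where "v i = (if i = 1 then a1 else if i = 2 then a2 else a3)" for i :: nat
  have v: "\<And>i. v i \<in> carrier" and v123: "v 1 = a1" "v 2 = a2" "v 3 = a3"
    using a by (simp_all add: v_def)
  have base: "oa_eqv L 0 v a1 a2 = oa_eqv L 0 (\<lambda>_. a3) a1 a2" by (simp add: v123)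
  from law have "(\<forall>i\<in>{1..n}. v i \<in> carrier) \<longrightarrow>
      ol_imp L (v 1) (v 3) \<sqinter>\<^sub>L oa_eqv L n v (v 1) (v 2) \<le>\<^sub>L ol_imp L (v 2) (v 3)"
    unfolding nOA_law_def by (rule spec)
  then have lawv: "ol_imp L a1 a3 \<sqinter>\<^sub>L oa_eqv L n v a1 a2 \<le>\<^sub>L ol_imp L a2 a3"
    using v unfolding v123 by blast
  have eqv_n: "oa_eqv L n v a1 a2 \<in> carrier"
    and eqv_le: "oa_eqv L 0 v a1 a2 \<le>\<^sub>L oa_eqv L n v a1 a2"
    using oa_eqv_above_base[where v = v and k = n, OF v a(1,2)] by simp_all
  have eqv_0: "oa_eqv L 0 v a1 a2 \<in> carrier"
    using oa_eqv_above_base[where v = v and k = 0, OF v a(1,2)] by simp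
  have imp13: "ol_imp L a1 a3 \<in> carrier" and imp23: "ol_imp L a2 a3 \<in> carrier"
    using a by (simp_all add: imp_closed)
  have "ol_imp L a1 a3 \<sqinter>\<^sub>L oa_eqv L 0 v a1 a2 \<le>\<^sub>L ol_imp L a1 a3 \<sqinter>\<^sub>L oa_eqv L n v a1 a2"
    using eqv_0 eqv_n imp13 eqv_le by (rule meet_mono_right)
  then have "ol_imp L a1 a3 \<sqinter>\<^sub>L oa_eqv L 0 v a1 a2 \<le>\<^sub>L ol_imp L a2 a3"
    using lawv imp13 imp23 eqv_0 eqv_n by (meson le_trans meet_closed)
  then show ?thesis unfolding oa3_instance_def base .
qed

text \<open>The instance \<open>a\<^sub>1 = 0, a\<^sub>2 = a', a\<^sub>3 = b\<close> with \<open>a \<le> b\<close> is exactly orthomodularity: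
  there \<open>a\<^sub>1 \<rightarrow> a\<^sub>3 = 1\<close>, \<open>a\<^sub>1 \<equiv>(3) a\<^sub>2 = b\<close> and \<open>a\<^sub>2 \<rightarrow> a\<^sub>3 = a \<squnion> (a' \<sqinter> b)\<close>.\<close>

lemma orthomodular_law_of_oa3:
  assumes a: "a \<in> carrier" and b: "b \<in> carrier" and ab: "a \<le>\<^sub>L b"
    and oa3: "oa3_instance L \<zero> (a\<^sup>\<bottom>) b"
  shows "b = a \<squnion>\<^sub>L (a\<^sup>\<bottom> \<sqinter>\<^sub>L b)"
proof -
  define r where "r = a \<squnion>\<^sub>L (a\<^sup>\<bottom> \<sqinter>\<^sub>L b)"
  have r: "r \<in> carrier" unfolding r_def using a b by (simp add: join_closed meet_closed compl_closed)
  have r_le_b: "r \<le>\<^sub>L b"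
    unfolding r_def using a b ab by (simp add: join_least meet_lower meet_closed compl_closed)
  have imp1: "ol_imp L \<zero> b = \<one>"
    unfolding ol_imp_def using b by (simp add: compl_zero zero_meet join_zero one_closed)
  have imp2: "ol_imp L (a\<^sup>\<bottom>) b = r"
    unfolding ol_imp_def r_def using a by (simp add: compl_compl)
  have imp3: "ol_imp L (\<zero>\<^sup>\<bottom>) b = b"
    unfolding ol_imp_def using b by (simp add: compl_zero compl_one one_meet zero_join)
  have imp4: "ol_imp L (a\<^sup>\<bottom>\<^sup>\<bottom>) b = \<one>"
    using ab a b unfolding ol_imp_def ol_le_def by (simp add: compl_compl join_comm compl_closed join_compl)
  have eqv: "oa_eqv L 0 (\<lambda>_. b) \<zero> (a\<^sup>\<bottom>) = b"
    using r b r_le_b by (simp add: imp1 imp2 imp3 imp4 one_meet meet_one le_iff_join)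
  have "b \<le>\<^sub>L r"
    using oa3 b unfolding oa3_instance_def eqv imp1 imp2 by (simp add: one_meet)
  then show ?thesis using le_antisym r b r_le_b unfolding r_def by blast
qed

theorem orthomodular_of_nOA_law: "nOA_law L n \<Longrightarrow> orthomodular L"
  unfolding orthomodular_def
  using ortholattice orthomodular_law_of_oa3 oa3_instance_of_nOA_law
  by (simp add: compl_closed zero_closed)

end

section \<open>Transporting an ortholattice along an injection\<close>

text \<open>Given \<open>f\<close> with a left inverse \<open>g\<close> on the carrier, the image of \<open>L\<close> under \<open>f\<close> is an
  isomorphic copy; this moves the counterexample below onto the carrier type \<open>nat\<close>.\<close>

definition ol_transport :: "('a \<Rightarrow> 'b) \<Rightarrow> ('b \<Rightarrow> 'a) \<Rightarrow> 'a ol_struct \<Rightarrow> 'b ol_struct" where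
  "ol_transport f g L =
     \<lparr>ol_carrier = f ` ol_carrier L,
      ol_meet = (\<lambda>x y. f (ol_meet L (g x) (g y))), ol_join = (\<lambda>x y. f (ol_join L (g x) (g y))),
      ol_compl = (\<lambda>x. f (ol_compl L (g x))), ol_zero = f (ol_zero L), ol_one = f (ol_one L)\<rparr>"

locale ol_embedding =
  fixes f :: "'a \<Rightarrow> 'b" and g :: "'b \<Rightarrow> 'a" and L :: "'a ol_struct"
  assumes ortholattice: "ortholattice L"
    and left_inverse: "x \<in> ol_carrier L \<Longrightarrow> g (f x) = x"
begin

abbreviation "T \<equiv> ol_transport f g L"

lemma
  shows carrier_T: "ol_carrier T = f ` ol_carrier L"
    and meet_T: "x \<in> ol_carrier L \<Longrightarrow> y \<in> ol_carrier L \<Longrightarrow> ol_meet T (f x) (f y) = f (ol_meet L x y)"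
    and join_T: "x \<in> ol_carrier L \<Longrightarrow> y \<in> ol_carrier L \<Longrightarrow> ol_join T (f x) (f y) = f (ol_join L x y)"
    and compl_T: "x \<in> ol_carrier L \<Longrightarrow> ol_compl T (f x) = f (ol_compl L x)"
    and zero_T: "ol_zero T = f (ol_zero L)"
    and one_T: "ol_one T = f (ol_one L)"
  unfolding ol_transport_def by (simp_all add: left_inverse)

lemma f_inj: "x \<in> ol_carrier L \<Longrightarrow> y \<in> ol_carrier L \<Longrightarrow> f x = f y \<longleftrightarrow> x = y"
  by (metis left_inverse)

lemmas closure = ortholattice[unfolded ortholattice_def Let_def]

lemma le_T: "x \<in> ol_carrier L \<Longrightarrow> y \<in> ol_carrier L \<Longrightarrow> ol_le T (f x) (f y) \<longleftrightarrow> ol_le L x y"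
  unfolding ol_le_def using closure by (simp add: meet_T f_inj)

lemma imp_T: "x \<in> ol_carrier L \<Longrightarrow> y \<in> ol_carrier L \<Longrightarrow> ol_imp T (f x) (f y) = f (ol_imp L x y)"
  unfolding ol_imp_def using closure by (simp add: meet_T join_T compl_T)

theorem ortholattice_T: "ortholattice T"
  unfolding ortholattice_def Let_def carrier_T Ball_image_comp comp_def
  using closure by (auto simp: meet_T join_T compl_T zero_T one_T le_T f_inj)

theorem orthomodular_T: "orthomodular L \<Longrightarrow> orthomodular T"
  unfolding orthomodular_def carrier_T Ball_image_comp comp_def
  using ortholattice_T closure by (auto simp: meet_T join_T compl_T le_T f_inj)

lemma oa3_instance_T:
  assumes "x \<in> ol_carrier L" "y \<in> ol_carrier L" "z \<in> ol_carrier L"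
  shows "oa3_instance T (f x) (f y) (f z) \<longleftrightarrow> oa3_instance L x y z"
  unfolding oa3_instance_def oa_eqv.simps
  using assms closure by (simp add: imp_T meet_T join_T compl_T le_T ol_imp_def)

end

section \<open>Closed subsets of an orthogonality space\<close>

locale orthogonality_space =
  fixes P :: "'p set" and perp :: "'p \<Rightarrow> 'p \<Rightarrow> bool"
  assumes perp_sym: "x \<in> P \<Longrightarrow> y \<in> P \<Longrightarrow> perp x y \<Longrightarrow> perp y x"
    and perp_irrefl: "x \<in> P \<Longrightarrow> \<not> perp x x"
begin

definition orth :: "'p set \<Rightarrow> 'p set" where
  "orth X = {x \<in> P. \<forall>y\<in>X. perp x y}"

definition closed_subspaces :: "'p set ol_struct" where
  "closed_subspaces =
     \<lparr>ol_carrier = {X. orth (orth X) = X}, ol_meet = (\<inter>),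
      ol_join = (\<lambda>X Y. orth (orth X \<inter> orth Y)), ol_compl = orth,
      ol_zero = {}, ol_one = P\<rparr>"

text \<open>\<open>orth\<close> is an antitone Galois self-map, so \<open>orth \<circ> orth\<close> is a closure operator.\<close>

lemma orth_subset: "orth X \<subseteq> P"
  unfolding orth_def by blast

lemma orth_antimono: "X \<subseteq> Y \<Longrightarrow> orth Y \<subseteq> orth X"
  unfolding orth_def by blast

lemma orth_orth_extensive: "X \<subseteq> P \<Longrightarrow> X \<subseteq> orth (orth X)"
  unfolding orth_def using perp_sym by blast

lemma orth_orth_orth: "X \<subseteq> P \<Longrightarrow> orth (orth (orth X)) = orth X"
  by (meson orth_antimono orth_orth_extensive orth_subset subset_antisym)

lemma orth_empty: "orth {} = P"
  unfolding orth_def by blast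

lemma orth_whole: "orth P = {}"
  unfolding orth_def using perp_irrefl by blast

lemma orth_insert: "orth (insert y Y) = orth {y} \<inter> orth Y"
  unfolding orth_def by blast

lemma orth_disjoint: "X \<inter> orth X = {}"
  unfolding orth_def using perp_irrefl by blast

lemma closed_inter:
  assumes "orth (orth X) = X" "orth (orth Y) = Y"
  shows "orth (orth (X \<inter> Y)) = X \<inter> Y"
proof
  show "orth (orth (X \<inter> Y)) \<subseteq> X \<inter> Y"
    using assms orth_antimono by (metis Int_lower1 Int_lower2 le_inf_iff)
  show "X \<inter> Y \<subseteq> orth (orth (X \<inter> Y))"
    using assms orth_subset orth_orth_extensive by (metis inf.coboundedI1)
qed

theorem ortholattice_closed_subspaces: "ortholattice closed_subspaces"
proof -
  have closed_orth: "orth (orth (orth X)) = orth X" if "orth (orth X) = X" for X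
    using orth_orth_orth orth_subset that by metis
  have join_absorb: "orth (orth X \<inter> orth (X \<inter> Y)) = X" if "orth (orth X) = X" for X Y
    using that orth_antimono[of "X \<inter> Y" X] by (simp add: Int_absorb2)
  have meet_absorb: "X \<inter> orth (orth X \<inter> orth Y) = X" if "orth (orth X) = X" for X Y
    using that orth_antimono[of "orth X \<inter> orth Y" "orth X"] by blast
  show ?thesis
    unfolding ortholattice_def Let_def closed_subspaces_def ol_le_def
    by (auto simp: closed_inter closed_orth orth_empty orth_whole orth_disjoint Int_ac
      join_absorb meet_absorb orth_subset orth_orth_orth)
      (metis Int_lower2 orth_antimono subsetD)
qed

end

section \<open>Part (ii): a 13-point orthomodular counterexample\<close>

definition orth_table :: "nat list list" where
  "orth_table = [[3, 7, 9, 10], [5, 8, 10, 12], [9, 11], [0, 7], [5, 6, 7, 11], [1, 4, 7, 12],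
           [4, 11], [0, 3, 4, 5], [1, 10], [0, 2, 10, 11], [0, 1, 8, 9], [2, 4, 6, 9], [1, 5]]"

definition perp13 :: "nat \<Rightarrow> nat \<Rightarrow> bool" where
  "perp13 x y \<longleftrightarrow> y \<in> set (orth_table ! x)"

lemma perp13_sym_irrefl:
  "\<forall>x\<in>set [0..<13]. \<forall>y\<in>set [0..<13]. (perp13 x y \<longrightarrow> perp13 y x) \<and> \<not> perp13 x x"
  unfolding perp13_def orth_table_def by code_simp

interpretation S13: orthogonality_space "{..<13}" perp13
  using perp13_sym_irrefl by unfold_locales (simp_all add: lessThan_atLeast0)

definition orth_list :: "nat list \<Rightarrow> nat list" where
  "orth_list S = filter (\<lambda>x. \<forall>y\<in>set S. perp13 x y) [0..<13]"

definition inter_list :: "nat list \<Rightarrow> nat list \<Rightarrow> nat list" where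
  "inter_list S T = filter (\<lambda>x. x \<in> set T) S"

text \<open>The 28 closed subsets: empty, everything, the points and the orthocomplements of points.\<close>

definition closed13 :: "nat list list" where
  "closed13 = [] # [0..<13] # map (\<lambda>i. [i]) [0..<13] @ orth_table"

lemma set_orth_list: "set (orth_list S) = S13.orth (set S)"
  unfolding orth_list_def S13.orth_def by auto

lemma set_inter_list: "set (inter_list S T) = set S \<inter> set T"
  unfolding inter_list_def by auto

lemma closed13_inter: "\<forall>S\<in>set closed13. \<forall>T\<in>set closed13. inter_list S T \<in> set closed13"
  unfolding closed13_def orth_table_def inter_list_def by code_simp

lemma closed13_orth_point: "\<forall>y\<in>set [0..<13]. orth_list [y] \<in> set closed13"
  unfolding closed13_def orth_list_def perp13_def orth_table_def by code_simp

lemma closed13_closed: "\<forall>S\<in>set closed13. orth_list (orth_list S) = S"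
  unfolding closed13_def orth_list_def perp13_def orth_table_def by code_simp

lemma closed13_orthomodular:
  "\<forall>S\<in>set closed13. \<forall>T\<in>set closed13. if set S \<subseteq> set T then
     orth_list (inter_list (orth_list S) (orth_list (inter_list (orth_list S) T))) = T else True"
  unfolding closed13_def orth_list_def inter_list_def perp13_def orth_table_def by code_simp


text \<open>The listed sets are exactly the closed subsets: every closed set is \<open>orth Y\<close> for a
  finite \<open>Y\<close>, i.e.\ an intersection of orthocomplements of points.\<close>

lemma closed_of_closed13: "S \<in> set closed13 \<Longrightarrow> set S \<in> ol_carrier S13.closed_subspaces"
  using closed13_closed unfolding S13.closed_subspaces_def by (simp flip: set_orth_list)

lemma orth_in_closed13:
  assumes "finite Y" "Y \<subseteq> {..<13}"
  shows "S13.orth Y \<in> set ` set closed13"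
  using assms
proof (induction Y rule: finite_induct)
  case empty
  have "S13.orth {} = set [0..<13]" unfolding S13.orth_empty by (simp add: lessThan_atLeast0)
  moreover have "[0..<13] \<in> set closed13" unfolding closed13_def by (intro list.set_intros)
  ultimately show ?case by blast
next
  case (insert y Y)
  then have "S13.orth Y \<in> set ` set closed13" by simp
  then obtain R where R: "R \<in> set closed13" "S13.orth Y = set R" by blast
  have "y < 13" using insert.prems by simp
  then have y: "orth_list [y] \<in> set closed13" using closed13_orth_point by simp
  have "S13.orth (insert y Y) = set (inter_list (orth_list [y]) R)"
    unfolding S13.orth_insert[of y Y] set_inter_list set_orth_list R(2) by simp
  then show ?case using closed13_inter R(1) y by blast
qed

lemma carrier_closed_subspaces: "ol_carrier S13.closed_subspaces = set ` set closed13"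
proof
  show "set ` set closed13 \<subseteq> ol_carrier S13.closed_subspaces"
    using closed_of_closed13 by blast
  show "ol_carrier S13.closed_subspaces \<subseteq> set ` set closed13"
  proof
    fix X assume "X \<in> ol_carrier S13.closed_subspaces"
    then have X: "X = S13.orth (S13.orth X)" unfolding S13.closed_subspaces_def by simp
    have "finite (S13.orth X)" "S13.orth X \<subseteq> {..<13}"
      using S13.orth_subset finite_subset by blast+
    then show "X \<in> set ` set closed13" using orth_in_closed13 X by metis
  qed
qed

lemma orthomodular_closed_subspaces: "orthomodular S13.closed_subspaces"
  unfolding orthomodular_def
proof (intro conjI S13.ortholattice_closed_subspaces ballI impI)
  fix X Y assume "X \<in> ol_carrier S13.closed_subspaces" "Y \<in> ol_carrier S13.closed_subspaces"
    and le: "ol_le S13.closed_subspaces X Y"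
  then obtain S T where S: "S \<in> set closed13" "X = set S" and T: "T \<in> set closed13" "Y = set T"
    unfolding carrier_closed_subspaces by blast
  have "set S \<subseteq> set T" using le S T unfolding ol_le_def S13.closed_subspaces_def by auto
  then have "orth_list (inter_list (orth_list S) (orth_list (inter_list (orth_list S) T))) = T"
    using closed13_orthomodular S(1) T(1) by fastforce
  then have "set (orth_list (inter_list (orth_list S) (orth_list (inter_list (orth_list S) T)))) = set T"
    by simp
  then have "S13.orth (S13.orth X \<inter> S13.orth (S13.orth X \<inter> Y)) = Y"
    unfolding set_orth_list set_inter_list S(2) T(2) .
  then show "Y = ol_join S13.closed_subspaces X (ol_meet S13.closed_subspaces (ol_compl S13.closed_subspaces X) Y)"
    unfolding S13.closed_subspaces_def by simp
qed

lemma orth_code: "S13.orth X = set (filter (\<lambda>x. \<forall>y\<in>X. perp13 x y) [0..<13])"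
  unfolding S13.orth_def by auto

lemma oa3_fails: "\<not> oa3_instance S13.closed_subspaces {0} {7} {5, 8, 10, 12}"
  unfolding oa3_instance_def oa_eqv.simps ol_imp_def ol_le_def S13.closed_subspaces_def
    ol_struct.simps orth_code perp13_def orth_table_def
  by code_simp

lemma witnesses_closed:
  "{0} \<in> ol_carrier S13.closed_subspaces" "{7} \<in> ol_carrier S13.closed_subspaces"
  "{5, 8, 10, 12} \<in> ol_carrier S13.closed_subspaces"
proof -
  have "[0] \<in> set closed13" "[7] \<in> set closed13" "[5, 8, 10, 12] \<in> set closed13"
    unfolding closed13_def orth_table_def by code_simp+
  then show "{0} \<in> ol_carrier S13.closed_subspaces" "{7} \<in> ol_carrier S13.closed_subspaces"
    "{5, 8, 10, 12} \<in> ol_carrier S13.closed_subspaces"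
    using closed_of_closed13 by force+
qed

interpretation enc: ol_embedding set_encode set_decode S13.closed_subspaces
proof
  show "ortholattice S13.closed_subspaces" by (rule S13.ortholattice_closed_subspaces)
  fix X assume "X \<in> ol_carrier S13.closed_subspaces"
  then have "X \<subseteq> {..<13}" unfolding S13.closed_subspaces_def using S13.orth_subset by force
  then have "finite X" using finite_subset by blast
  then show "set_decode (set_encode X) = X" by (rule set_encode_inverse)
qed

definition L13 :: "nat ol_struct" where
  "L13 = ol_transport set_encode set_decode S13.closed_subspaces"

lemma orthomodular_L13: "orthomodular L13"
  unfolding L13_def using orthomodular_closed_subspaces by (rule enc.orthomodular_T)

lemma not_nOA_law_L13: "\<not> nOA_law L13 n"
proof
  assume law: "nOA_law L13 n"
  interpret L13: OL L13
    unfolding L13_def by unfold_locales (rule enc.ortholattice_T)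
  have "set_encode X \<in> ol_carrier L13" if "X \<in> ol_carrier S13.closed_subspaces" for X
    using that unfolding L13_def by (simp add: enc.carrier_T)
  then have "oa3_instance L13 (set_encode {0}) (set_encode {7}) (set_encode {5, 8, 10, 12})"
    using L13.oa3_instance_of_nOA_law[OF law] witnesses_closed by blast
  then show False
    using oa3_fails enc.oa3_instance_T[OF witnesses_closed] unfolding L13_def by blast
qed

theorem theorem4p4:
  shows "\<forall>n::nat. n \<ge> 3 \<longrightarrow>
     (\<forall>L :: 'a ol_struct. ortholattice L \<and> nOA_law L n \<longrightarrow> orthomodular L) \<and>
     (\<exists>L :: nat ol_struct. orthomodular L \<and> \<not> nOA_law L n)"
proof (rule allI, rule impI, rule conjI)
  fix n :: nat
  show "\<forall>L :: 'a ol_struct. ortholattice L \<and> nOA_law L n \<longrightarrow> orthomodular L"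
    using OL.orthomodular_of_nOA_law OL.intro by blast
  show "\<exists>L :: nat ol_struct. orthomodular L \<and> \<not> nOA_law L n"
    using orthomodular_L13 not_nOA_law_L13 by blast
qed

end
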